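(* For every smooth closed plane curve parametrized by arc length with rotation number $n\ge1$, $4\pi^2\widetilde I_{-1}\le I_0$.
   Context: A closed plane curve is a smooth map $\vec f:\mathbb{R}/L\mathbb{Z}\to\mathbb{R}^2$ parametrized by arc length $s$, where $L>0$ is its length. $\vec\nu$ is $\partial_s\vec f$ rotated counterclockwise by $\pi/2$, $\kappa=\partial_s^2\vec f\cdot\vec\nu$, $n=\frac1{2\pi}\int_0^L\kappa\,ds$, $\tilde\kappa=\kappa-\frac1L\int_0^L\kappa\,ds$, $I_0=L\int_0^L\tilde\kappa^2\,ds$. Identifying $\mathbb{R}^2$ with $\mathbb{C}$, $f=f_1+if_2$, $\hat f(k)=L^{-1/2}\int_0^L f(s)e^{-2\pi i k s/L}\,ds$, and $\widetilde I_{-1}=\frac{4\pi^2}{L^3}\sum_{k\in\mathbb Z\setminus\{0\}}(k-n)^2|\hat f(k)|^2$. *)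

theory Defs
  imports "HOL-Analysis.Analysis"
begin

text \<open>Plane curves are maps real => complex (R^2 identified with C).
  The curve is given by an L-periodic function; arc length s ranges over [0,L].\<close>

definition vderiv :: "(real \<Rightarrow> complex) \<Rightarrow> real \<Rightarrow> complex" where
  "vderiv g = (\<lambda>x. vector_derivative g (at x))"

definition smooth_fun :: "(real \<Rightarrow> complex) \<Rightarrow> bool" where
  "smooth_fun g \<longleftrightarrow> (\<forall>k x. ((vderiv ^^ k) g) differentiable (at x))"

definition closed_arclength_curve :: "(real \<Rightarrow> complex) \<Rightarrow> real \<Rightarrow> bool" where
  "closed_arclength_curve f L \<longleftrightarrow> L > 0 \<and> smooth_fun f \<and>
     (\<forall>s. f (s + L) = f s) \<and> (\<forall>s. norm (vderiv f s) = 1)"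

definition normal :: "(real \<Rightarrow> complex) \<Rightarrow> real \<Rightarrow> complex" where
  "normal f s = \<i> * vderiv f s"

definition curvature :: "(real \<Rightarrow> complex) \<Rightarrow> real \<Rightarrow> real" where
  "curvature f s = vderiv (vderiv f) s \<bullet> normal f s"

definition rotation_number :: "(real \<Rightarrow> complex) \<Rightarrow> real \<Rightarrow> real" where
  "rotation_number f L = (1 / (2 * pi)) * integral {0..L} (curvature f)"

definition curvature_tilde :: "(real \<Rightarrow> complex) \<Rightarrow> real \<Rightarrow> real \<Rightarrow> real" where
  "curvature_tilde f L s = curvature f s - (1 / L) * integral {0..L} (curvature f)"

definition I0 :: "(real \<Rightarrow> complex) \<Rightarrow> real \<Rightarrow> real" where
  "I0 f L = L * integral {0..L} (\<lambda>s. (curvature_tilde f L s)\<^sup>2)"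

definition fourier_coeff :: "(real \<Rightarrow> complex) \<Rightarrow> real \<Rightarrow> int \<Rightarrow> complex" where
  "fourier_coeff f L k = of_real (L powr (-1/2)) *
     integral {0..L} (\<lambda>s. f s * exp (- 2 * of_real pi * \<i> * of_int k * of_real s / of_real L))"

definition I_tilde_minus1 :: "(real \<Rightarrow> complex) \<Rightarrow> real \<Rightarrow> real" where
  "I_tilde_minus1 f L = 4 * pi\<^sup>2 / L ^ 3 *
     (\<Sum>\<^sub>\<infinity>k\<in>UNIV - {0::int}. (of_int k - rotation_number f L)\<^sup>2 * (cmod (fourier_coeff f L k))\<^sup>2)"

end

theory Submission
  imports Defs
begin

(*
  Let mu = 2 pi n / L be the mean curvature and h = f'' - i mu f'.  For a unit-speed curve
  f'' = i kappa f', so h = i kappa~ f' and |h| = |kappa~|.  Two integrations by parts over the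
  period turn the k-th Fourier coefficient of h into -(2 pi / L)^2 k (k - n) times that of f,
  and Bessel's inequality for h bounds (2 pi / L)^4 sum_k k^2 (k - n)^2 |f^(k)|^2 by the
  integral of kappa~^2.  Since k^2 >= 1 for k <> 0, this dominates 4 pi^2 I~_{-1}.
*)

definition fourier_freq :: "real \<Rightarrow> int \<Rightarrow> complex" where
  "fourier_freq L k = 2 * of_real pi * \<i> * of_int k / of_real L"

definition fourier_char :: "real \<Rightarrow> int \<Rightarrow> real \<Rightarrow> complex" where
  "fourier_char L k s = exp (of_real s * fourier_freq L k)"

definition fourier_integral :: "real \<Rightarrow> (real \<Rightarrow> complex) \<Rightarrow> int \<Rightarrow> complex" where
  "fourier_integral L u k = integral {0..L} (\<lambda>s. u s * fourier_char L (-k) s)"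

lemma fourier_freq_uminus: "fourier_freq L (-k) = - fourier_freq L k"
  by (simp add: fourier_freq_def)

lemma fourier_freq_add: "fourier_freq L (j + k) = fourier_freq L j + fourier_freq L k"
  by (simp add: fourier_freq_def ring_distribs add_divide_distrib)

lemma has_vector_derivative_fourier_char:
  "(fourier_char L k has_vector_derivative (fourier_freq L k * fourier_char L k s)) (at s within S)"
proof -
  have "((\<lambda>z. exp (z * fourier_freq L k)) has_field_derivative
          (exp (of_real s * fourier_freq L k) * fourier_freq L k)) (at (of_real s))"
    by (auto intro!: derivative_eq_intros)
  from has_vector_derivative_real_field[OF this] show ?thesis
    unfolding fourier_char_def by (simp add: mult.commute)
qed

lemma continuous_on_fourier_char [continuous_intros]: "continuous_on S (fourier_char L k)"
  by (rule continuous_on_vector_derivative, rule has_vector_derivative_fourier_char)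

lemma fourier_char_at_0 [simp]: "fourier_char L k 0 = 1"
  by (simp add: fourier_char_def)

lemma fourier_char_index_0 [simp]: "fourier_char L 0 = (\<lambda>_. 1)"
  by (simp add: fourier_char_def fourier_freq_def fun_eq_iff)

lemma fourier_char_period:
  assumes "L \<noteq> 0"
  shows "fourier_char L k L = 1"
proof -
  have "of_real L * fourier_freq L k = (2 * of_int k * of_real pi) * \<i>"
    using assms by (simp add: fourier_freq_def field_simps)
  then show ?thesis
    unfolding fourier_char_def using exp_integer_2pi[of "of_int k"] by simp
qed

lemma fourier_char_mult: "fourier_char L j s * fourier_char L k s = fourier_char L (j + k) s"
  by (simp add: fourier_char_def fourier_freq_add ring_distribs flip: exp_add)

lemma cnj_fourier_char: "cnj (fourier_char L k s) = fourier_char L (-k) s"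
  by (simp add: fourier_char_def fourier_freq_def exp_cnj)

lemma has_integral_fourier_char:
  assumes "L > 0"
  shows "(fourier_char L k has_integral (if k = 0 then of_real L else 0)) {0..L}"
proof (cases "k = 0")
  case True
  then show ?thesis
    using has_integral_const_real[of "1::complex" 0 L] assms
    by (simp add: scaleR_conv_of_real)
next
  case False
  define c where "c = fourier_freq L k"
  have "c \<noteq> 0"
    using False assms by (simp add: c_def fourier_freq_def)
  have "(fourier_char L k has_integral
          inverse c * fourier_char L k L - inverse c * fourier_char L k 0) {0..L}"
  proof (rule fundamental_theorem_of_calculus)
    fix x assume "x \<in> {0..L}"
    show "((\<lambda>s. inverse c * fourier_char L k s) has_vector_derivative fourier_char L k x)
            (at x within {0..L})"
      using has_vector_derivative_mult_right[OF has_vector_derivative_fourier_char,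
          of "inverse c" L k x "{0..L}"] \<open>c \<noteq> 0\<close>
      by (simp add: c_def field_simps)
  qed (use assms in simp)
  then show ?thesis
    using False fourier_char_period[of L k] assms by simp
qed

lemma integral_fourier_char_orthogonal:
  assumes "L > 0"
  shows "integral {0..L} (\<lambda>s. fourier_char L j s * fourier_char L (-k) s)
           = (if j = k then of_real L else 0)"
  using integral_unique[OF has_integral_fourier_char[OF assms, of "j - k"]]
  by (simp add: fourier_char_mult)

lemma integral_Re_integrable:
  "f integrable_on A \<Longrightarrow> integral A (\<lambda>x. Re (f x)) = Re (integral A f)"
  by (rule integral_unique, rule has_integral_Re, rule integrable_integral)

lemma integral_norm_sq_trig_poly:
  assumes L: "L > 0" and K: "finite K"
  shows "integral {0..L} (\<lambda>s. (cmod (\<Sum>k\<in>K. c k * fourier_char L k s))\<^sup>2)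
           = L * (\<Sum>k\<in>K. (cmod (c k))\<^sup>2)"
proof -
  define T where "T s = (\<Sum>k\<in>K. c k * fourier_char L k s)" for s
  have "integral {0..L} (\<lambda>s. T s * cnj (T s))
      = integral {0..L} (\<lambda>s. \<Sum>j\<in>K. \<Sum>k\<in>K.
          c j * cnj (c k) * (fourier_char L j s * fourier_char L (-k) s))"
    by (simp add: T_def sum_product cnj_fourier_char mult_ac)
  also have "\<dots> = (\<Sum>j\<in>K. \<Sum>k\<in>K. c j * cnj (c k) *
          integral {0..L} (\<lambda>s. fourier_char L j s * fourier_char L (-k) s))"
    by (simp add: integral_sum K integrable_sum integrable_continuous_interval continuous_intros)
  also have "\<dots> = of_real (L * (\<Sum>k\<in>K. (cmod (c k))\<^sup>2))"
    by (simp add: integral_fourier_char_orthogonal[OF L] K if_distrib sum.delta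
        sum_distrib_left mult.commute flip: complex_norm_square cong: if_cong)
  finally have complex_integral:
    "integral {0..L} (\<lambda>s. T s * cnj (T s)) = of_real (L * (\<Sum>k\<in>K. (cmod (c k))\<^sup>2))" .
  have "integral {0..L} (\<lambda>s. (cmod (T s))\<^sup>2) = integral {0..L} (\<lambda>s. Re (T s * cnj (T s)))"
    by (simp add: complex_mult_cnj cmod_power2)
  also have "\<dots> = Re (integral {0..L} (\<lambda>s. T s * cnj (T s)))"
    unfolding T_def by (intro integral_Re_integrable integrable_continuous_interval continuous_intros)
  also have "\<dots> = L * (\<Sum>k\<in>K. (cmod (c k))\<^sup>2)"
    by (simp add: complex_integral)
  finally show ?thesis
    unfolding T_def .
qed

lemma integral_Re_mult_cnj_trig_poly:
  assumes h: "continuous_on {0..L} h" and K: "finite K"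
  shows "integral {0..L} (\<lambda>s. Re (h s * cnj (\<Sum>k\<in>K. c k * fourier_char L k s)))
           = (\<Sum>k\<in>K. Re (cnj (c k) * fourier_integral L h k))"
proof -
  have "integral {0..L} (\<lambda>s. h s * cnj (\<Sum>k\<in>K. c k * fourier_char L k s))
      = integral {0..L} (\<lambda>s. \<Sum>k\<in>K. cnj (c k) * (h s * fourier_char L (-k) s))"
    by (simp add: cnj_fourier_char sum_distrib_left mult_ac)
  also have "\<dots> = (\<Sum>k\<in>K. cnj (c k) * fourier_integral L h k)"
    by (simp add: fourier_integral_def integral_sum K integrable_continuous_interval continuous_intros h)
  finally show ?thesis
    by (subst integral_Re_integrable) (auto intro!: integrable_continuous_interval continuous_intros h)
qed

lemma norm_diff_square_complex:
  "(cmod (a - b))\<^sup>2 = (cmod a)\<^sup>2 - 2 * Re (a * cnj b) + (cmod b)\<^sup>2"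
  by (simp add: cmod_power2 power2_diff algebra_simps)

lemma bessel_inequality:
  assumes L: "L > 0" and h: "continuous_on {0..L} h" and K: "finite K"
  shows "(\<Sum>k\<in>K. (cmod (fourier_integral L h k))\<^sup>2) \<le> L * integral {0..L} (\<lambda>s. (cmod (h s))\<^sup>2)"
proof -
  define T where "T s = (\<Sum>k\<in>K. fourier_integral L h k * fourier_char L k s)" for s
  define S where "S = (\<Sum>k\<in>K. (cmod (fourier_integral L h k))\<^sup>2)"
  have T: "continuous_on {0..L} T"
    unfolding T_def by (intro continuous_intros)
  have expand: "(cmod (h s - T s / of_real L))\<^sup>2
      = (cmod (h s))\<^sup>2 - 2 / L * Re (h s * cnj (T s)) + (cmod (T s))\<^sup>2 / L\<^sup>2" for s
    unfolding norm_diff_square_complex using L by (simp add: norm_divide power_divide)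
  have int_Re: "integral {0..L} (\<lambda>s. Re (h s * cnj (T s))) = S"
    unfolding T_def S_def integral_Re_mult_cnj_trig_poly[OF h K]
    by (simp add: complex_mult_cnj mult.commute flip: cmod_power2)
  have int_T: "integral {0..L} (\<lambda>s. (cmod (T s))\<^sup>2) = L * S"
    unfolding T_def S_def by (rule integral_norm_sq_trig_poly[OF L K])
  have "0 \<le> integral {0..L} (\<lambda>s. (cmod (h s - T s / of_real L))\<^sup>2)"
    using L by (auto intro!: integral_nonneg integrable_continuous_interval continuous_intros h T)
  also have "\<dots> = integral {0..L} (\<lambda>s. (cmod (h s))\<^sup>2)
      - 2 / L * integral {0..L} (\<lambda>s. Re (h s * cnj (T s)))
      + integral {0..L} (\<lambda>s. (cmod (T s))\<^sup>2) / L\<^sup>2"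
    unfolding expand using L
    by (intro integral_unique has_integral_add has_integral_diff has_integral_mult_right
        has_integral_divide integrable_integral integrable_continuous_interval continuous_intros h T)
  also have "\<dots> = integral {0..L} (\<lambda>s. (cmod (h s))\<^sup>2) - S / L"
    unfolding int_Re int_T using L by (simp add: power2_eq_square)
  finally show ?thesis
    using L by (simp add: S_def field_simps power2_eq_square)
qed

lemma fourier_integral_vector_derivative:
  assumes L: "L > 0"
    and u: "\<And>x. x \<in> {0..L} \<Longrightarrow> (u has_vector_derivative u' x) (at x within {0..L})"
    and u': "continuous_on {0..L} u'"
    and periodic: "u L = u 0"
  shows "fourier_integral L u' k = fourier_freq L k * fourier_integral L u k"
proof -
  have "continuous_on {0..L} u"
    using u by (rule continuous_on_vector_derivative)
  then have integrable: "(\<lambda>s. u s * fourier_char L (-k) s) integrable_on {0..L}"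
      "(\<lambda>s. u' s * fourier_char L (-k) s) integrable_on {0..L}"
    by (auto intro!: integrable_continuous_interval continuous_intros u')
  have "((\<lambda>s. u' s * fourier_char L (-k) s - fourier_freq L k * (u s * fourier_char L (-k) s))
          has_integral u L * fourier_char L (-k) L - u 0 * fourier_char L (-k) 0) {0..L}"
  proof (rule fundamental_theorem_of_calculus)
    fix x assume "x \<in> {0..L}"
    from has_vector_derivative_mult[OF u[OF this] has_vector_derivative_fourier_char[of L "-k"]]
    show "((\<lambda>s. u s * fourier_char L (-k) s) has_vector_derivative
            u' x * fourier_char L (-k) x - fourier_freq L k * (u x * fourier_char L (-k) x))
            (at x within {0..L})"
      by (simp add: fourier_freq_uminus algebra_simps)
  qed (use L in simp)
  then have "integral {0..L}
      (\<lambda>s. u' s * fourier_char L (-k) s - fourier_freq L k * (u s * fourier_char L (-k) s)) = 0"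
    using periodic fourier_char_period[of L "-k"] L by (simp add: integral_unique)
  then show ?thesis
    unfolding fourier_integral_def
    by (simp add: integral_diff integrable integrable_on_mult_right)
qed

lemma fourier_integral_diff_scaled:
  assumes "continuous_on {0..L} u" "continuous_on {0..L} v"
  shows "fourier_integral L (\<lambda>s. u s - c * v s) k = fourier_integral L u k - c * fourier_integral L v k"
proof -
  have "fourier_integral L (\<lambda>s. u s - c * v s) k
      = integral {0..L} (\<lambda>s. u s * fourier_char L (-k) s - c * (v s * fourier_char L (-k) s))"
    unfolding fourier_integral_def by (simp add: left_diff_distrib mult.assoc)
  also have "\<dots> = fourier_integral L u k - c * fourier_integral L v k"
    unfolding fourier_integral_def using assms
    by (subst integral_diff) (auto intro!: integrable_continuous_interval continuous_intros)
  finally show ?thesis .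
qed

lemma infsum_le_of_finite_sums_le:
  fixes t :: "'a \<Rightarrow> real"
  assumes "\<And>K. finite K \<Longrightarrow> K \<subseteq> A \<Longrightarrow> sum t K \<le> B"
  shows "infsum t A \<le> B"
proof (cases "t summable_on A")
  case True
  then show ?thesis
    using assms by (rule infsum_le_finite_sums)
next
  case False
  then show ?thesis
    using assms[of "{}"] by (simp add: infsum_not_exists)
qed

lemma sum_shifted_square_le_weighted:
  fixes c :: "int \<Rightarrow> real"
  assumes "0 \<notin> K" and "\<And>k. 0 \<le> c k"
  shows "(\<Sum>k\<in>K. (k - x)\<^sup>2 * c k) \<le> (\<Sum>k\<in>K. (k * (k - x))\<^sup>2 * c k)"
proof (rule sum_mono)
  fix k assume "k \<in> K"
  then have "1 \<le> (real_of_int k)\<^sup>2"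
    using assms(1) by (metis of_int_1_le_iff of_int_power zero_less_power2 int_one_le_iff_zero_less)
  then show "(k - x)\<^sup>2 * c k \<le> (k * (k - x))\<^sup>2 * c k"
    using mult_right_mono[of 1 "(real_of_int k)\<^sup>2" "(k - x)\<^sup>2 * c k"] assms(2)[of k]
    by (simp add: power_mult_distrib mult.assoc)
qed

lemma smooth_fun_vderiv: "smooth_fun g \<Longrightarrow> smooth_fun (vderiv g)"
proof (unfold smooth_fun_def, intro allI)
  fix k x
  assume "\<forall>k x. (vderiv ^^ k) g differentiable at x"
  then have "(vderiv ^^ Suc k) g differentiable at x" by blast
  then show "(vderiv ^^ k) (vderiv g) differentiable at x"
    by (simp only: funpow_Suc_right comp_apply)
qed

lemma smooth_fun_has_vderiv:
  "smooth_fun g \<Longrightarrow> (g has_vector_derivative vderiv g x) (at x)"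
proof -
  assume "smooth_fun g"
  then have "(vderiv ^^ 0) g differentiable at x"
    unfolding smooth_fun_def by blast
  then show ?thesis
    unfolding vderiv_def by (simp add: vector_derivative_works)
qed

lemma smooth_fun_continuous_on: "smooth_fun g \<Longrightarrow> continuous_on S g"
  by (rule continuous_on_vector_derivative, rule has_vector_derivative_at_within,
      rule smooth_fun_has_vderiv)

lemma vector_derivative_periodic:
  assumes periodic: "\<And>s. u (s + L) = u s"
    and u: "\<And>x. (u has_vector_derivative u' x) (at x)"
  shows "u' (x + L) = u' x"
proof -
  have "((u \<circ> (\<lambda>s. s + L)) has_vector_derivative (1 *\<^sub>R u' (x + L))) (at x)"
    by (rule vector_diff_chain_at) (auto intro!: derivative_eq_intros u)
  moreover have "u \<circ> (\<lambda>s. s + L) = u"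
    using periodic by (auto simp: o_def)
  ultimately have "(u has_vector_derivative u' (x + L)) (at x)"
    by simp
  then show ?thesis
    using u by (rule vector_derivative_unique_at)
qed

lemma vector_derivative_unit_complex:
  assumes g: "\<And>x. (g has_vector_derivative g' x) (at x)"
    and unit: "\<And>x. cmod (g x) = 1"
  shows "g' s = \<i> * of_real (g' s \<bullet> (\<i> * g s)) * g s"
proof -
  have one: "g x * cnj (g x) = 1" for x
    using unit[of x] by (simp flip: complex_norm_square)
  have "((\<lambda>x. g x * cnj (g x)) has_vector_derivative (g s * cnj (g' s) + g' s * cnj (g s))) (at s)"
    by (intro has_vector_derivative_mult has_vector_derivative_cnj g)
  then have "((\<lambda>x. 1::complex) has_vector_derivative (g s * cnj (g' s) + g' s * cnj (g s))) (at s)"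
    by (simp add: one)
  then have "g s * cnj (g' s) + g' s * cnj (g s) = 0"
    using vector_derivative_unique_at has_vector_derivative_const by blast
  then have "Re (g' s * cnj (g s)) = 0"
    by (simp add: complex_eq_iff algebra_simps)
  moreover have "g' s = (g' s * cnj (g s)) * g s"
    using one[of s] by (simp add: mult.assoc mult.commute)
  moreover have "g' s \<bullet> (\<i> * g s) = Im (g' s * cnj (g s))"
    using unit[of s] by (simp add: inner_complex_def cmod_power2 algebra_simps power2_eq_square)
  ultimately show ?thesis
    by (simp add: complex_eq_iff)
qed

(* Equal to i kappa~ f' (curvature_defect_eq), but written linearly in f so that its Fourier
   coefficients follow from those of f by integration by parts. *)
definition curvature_defect :: "(real \<Rightarrow> complex) \<Rightarrow> real \<Rightarrow> real \<Rightarrow> complex" where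
  "curvature_defect f L s =
     vderiv (vderiv f) s - \<i> * of_real (2 * pi * rotation_number f L / L) * vderiv f s"

lemma curvature_defect_eq:
  assumes "closed_arclength_curve f L"
  shows "curvature_defect f L s = \<i> * of_real (curvature_tilde f L s) * vderiv f s"
proof -
  have L: "L > 0" and smooth: "smooth_fun (vderiv f)" and unit: "\<And>s. cmod (vderiv f s) = 1"
    using assms smooth_fun_vderiv unfolding closed_arclength_curve_def by auto
  have "vderiv (vderiv f) s = \<i> * of_real (curvature f s) * vderiv f s"
    unfolding curvature_def normal_def
    by (rule vector_derivative_unit_complex[OF smooth_fun_has_vderiv[OF smooth] unit])
  then show ?thesis
    using L by (simp add: curvature_defect_def curvature_tilde_def rotation_number_def algebra_simps)
qed

lemma fourier_integral_curvature_defect: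
  assumes "closed_arclength_curve f L"
  shows "fourier_integral L (curvature_defect f L) k =
           - of_real ((2 * pi / L)\<^sup>2 * (k * (k - rotation_number f L))) * fourier_integral L f k"
proof -
  define f' where "f' = vderiv f"
  define f'' where "f'' = vderiv f'"
  have L: "L > 0" and smooth: "smooth_fun f" and periodic: "\<And>s. f (s + L) = f s"
    using assms unfolding closed_arclength_curve_def by auto
  have smooth': "smooth_fun f'" and smooth'': "smooth_fun f''"
    unfolding f''_def f'_def using smooth by (auto intro: smooth_fun_vderiv)
  have f': "(f has_vector_derivative f' x) (at x within S)" for x S
    unfolding f'_def by (rule has_vector_derivative_at_within[OF smooth_fun_has_vderiv[OF smooth]])
  have f'': "(f' has_vector_derivative f'' x) (at x within S)" for x S
    unfolding f''_def by (rule has_vector_derivative_at_within[OF smooth_fun_has_vderiv[OF smooth']])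
  have "f' (0 + L) = f' 0"
    unfolding f'_def using periodic smooth_fun_has_vderiv[OF smooth]
    by (rule vector_derivative_periodic)
  then have F': "fourier_integral L f' k = fourier_freq L k * fourier_integral L f k"
    and F'': "fourier_integral L f'' k = fourier_freq L k * fourier_integral L f' k"
    using periodic[of 0]
    by (auto intro!: fourier_integral_vector_derivative L f' f''
        smooth_fun_continuous_on smooth' smooth'')
  have "fourier_integral L (curvature_defect f L) k
      = fourier_integral L f'' k - \<i> * of_real (2 * pi * rotation_number f L / L) * fourier_integral L f' k"
    unfolding curvature_defect_def f''_def[symmetric] f'_def[symmetric]
    by (intro fourier_integral_diff_scaled smooth_fun_continuous_on smooth' smooth'')
  also have "\<dots> = - of_real ((2 * pi / L)\<^sup>2 * (k * (k - rotation_number f L))) * fourier_integral L f k"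
    using L by (simp add: F' F'' fourier_freq_def field_simps power2_eq_square)
  finally show ?thesis .
qed

lemma fourier_coeff_eq_fourier_integral:
  "fourier_coeff f L k = of_real (L powr (-1/2)) * fourier_integral L f k"
proof -
  have "- 2 * of_real pi * \<i> * of_int k * of_real s / of_real L = of_real s * fourier_freq L (-k)" for s
    by (simp add: fourier_freq_def mult_ac)
  then show ?thesis
    by (simp add: fourier_coeff_def fourier_integral_def fourier_char_def)
qed

lemma norm_fourier_coeff_square:
  assumes "L > 0"
  shows "(cmod (fourier_coeff f L k))\<^sup>2 = (cmod (fourier_integral L f k))\<^sup>2 / L"
proof -
  have "(L powr (-1/2))\<^sup>2 = 1 / L"
    using assms by (simp add: power2_eq_square flip: powr_add powr_minus_divide)
  then show ?thesis
    by (simp add: fourier_coeff_eq_fourier_integral norm_mult power_mult_distrib)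
qed

lemma weighted_fourier_coeff_sum_le_I0:
  assumes curve: "closed_arclength_curve f L" and K: "finite K"
  shows "16 * pi ^ 4 / L ^ 3 *
           (\<Sum>k\<in>K. (k * (k - rotation_number f L))\<^sup>2 * (cmod (fourier_coeff f L k))\<^sup>2) \<le> I0 f L"
proof -
  have L: "L > 0" and smooth: "smooth_fun f" and unit: "\<And>s. cmod (vderiv f s) = 1"
    using curve unfolding closed_arclength_curve_def by auto
  have "continuous_on {0..L} (curvature_defect f L)"
    unfolding curvature_defect_def
    by (intro continuous_intros smooth_fun_continuous_on smooth smooth_fun_vderiv)
  have coeff: "(cmod (fourier_integral L (curvature_defect f L) k))\<^sup>2
      = 16 * pi ^ 4 / L ^ 3 * ((k * (k - rotation_number f L))\<^sup>2 * (cmod (fourier_coeff f L k))\<^sup>2)"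
    for k
  proof -
    have "cmod (fourier_integral L (curvature_defect f L) k)
        = \<bar>(2 * pi / L)\<^sup>2 * (k * (k - rotation_number f L))\<bar> * cmod (fourier_integral L f k)"
      by (simp only: fourier_integral_curvature_defect[OF curve] norm_mult norm_minus_cancel norm_of_real)
    then have "(cmod (fourier_integral L (curvature_defect f L) k))\<^sup>2
        = 16 * pi ^ 4 / L ^ 4 * (k * (k - rotation_number f L))\<^sup>2 * (cmod (fourier_integral L f k))\<^sup>2"
      by (simp add: power_mult_distrib power_divide power2_abs flip: power_mult)
    then show ?thesis
      unfolding norm_fourier_coeff_square[OF L] using L by (simp add: field_simps eval_nat_numeral)
  qed
  have "(\<Sum>k\<in>K. (cmod (fourier_integral L (curvature_defect f L) k))\<^sup>2)
      \<le> L * integral {0..L} (\<lambda>s. (cmod (curvature_defect f L s))\<^sup>2)"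
    by (rule bessel_inequality[OF L \<open>continuous_on {0..L} (curvature_defect f L)\<close> K])
  also have "\<dots> = I0 f L"
    by (simp add: I0_def curvature_defect_eq[OF curve] norm_mult unit)
  finally show ?thesis
    by (simp add: coeff sum_distrib_left)
qed

theorem mainTheorem7:
  fixes f :: "real \<Rightarrow> complex" and L :: real
  assumes "closed_arclength_curve f L"
    and "rotation_number f L \<ge> 1"
  shows "4 * pi\<^sup>2 * I_tilde_minus1 f L \<le> I0 f L"
proof -
  define n where "n = rotation_number f L"
  define t where "t = (\<lambda>k. (of_int k - n)\<^sup>2 * (cmod (fourier_coeff f L k))\<^sup>2)"
  have L: "L > 0"
    using assms(1) unfolding closed_arclength_curve_def by simp
  have "sum t K \<le> L ^ 3 / (16 * pi ^ 4) * I0 f L" if "finite K" "K \<subseteq> UNIV - {0}" for K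
  proof -
    have "sum t K \<le> (\<Sum>k\<in>K. (k * (k - n))\<^sup>2 * (cmod (fourier_coeff f L k))\<^sup>2)"
      unfolding t_def using that(2) by (intro sum_shifted_square_le_weighted) auto
    also have "\<dots> \<le> L ^ 3 / (16 * pi ^ 4) * I0 f L"
      using weighted_fourier_coeff_sum_le_I0[OF assms(1) that(1)] L
      by (simp add: n_def field_simps)
    finally show ?thesis .
  qed
  then have "infsum t (UNIV - {0}) \<le> L ^ 3 / (16 * pi ^ 4) * I0 f L"
    by (rule infsum_le_of_finite_sums_le)
  then have "16 * pi ^ 4 / L ^ 3 * infsum t (UNIV - {0}) \<le> I0 f L"
    using L by (simp add: field_simps)
  moreover have "4 * pi\<^sup>2 * I_tilde_minus1 f L = 16 * pi ^ 4 / L ^ 3 * infsum t (UNIV - {0})"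
    unfolding I_tilde_minus1_def t_def n_def by (simp add: eval_nat_numeral)
  ultimately show ?thesis
    by simp
qed

end
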